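(* Let $(A,\succ,\prec)$ be an anti-pre-Novikov algebra and $(V,l_{\succ},r_{\succ},l_{\prec},r_{\prec})$ a representation of it. Put $l_{\circ}=l_{\succ}+l_{\prec}$, $r_{\circ}=r_{\succ}+r_{\prec}$, $r_{\odot}=r_{\succ}+l_{\prec}$. Let $\hat A=A\oplus V^*$ with operations $(x+a^* )\succ(y+b^* )=x\succ y-(l_{\circ}^*+r_{\circ}^* )(x)b^*-r_{\succ}^*(y)a^*$ and $(x+a^* )\prec(y+b^* )=x\prec y+r_{\odot}^*(x)b^*+r_{\circ}^*(y)a^*$ ($x,y\in A$, $a^*,b^*\in V^*$); this is the semi-direct product anti-pre-Novikov algebra $A\ltimes V^*$ for the dual representation $(V^*,-(l_{\circ}^*+r_{\circ}^* ),-r_{\succ}^*,r_{\odot}^*,r_{\circ}^* )$. Let $T:V\to A$ be linear, identified with $\sum_{i}T(v_i)\otimes v_i^*\in\hat A\otimes\hat A$ for a basis $\{v_i\}$ of $V$ with dual basis $\{v_i^*\}$. Then $s=T-\tau(T)$ is a (skew-symmetric) solution of the anti-pre-Novikov Yang–Baxter equation in $\hat A$ if and only if $T$ is an $\mathcal O$-operator on $(A,\succ,\prec)$ associated to $(V,l_{\succ},r_{\succ},l_{\prec},r_{\prec})$.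
   Context: An anti-pre-Novikov algebra is $(A,\succ,\prec)$ such that with $x\circ y=x\succ y+x\prec y$: $(x\circ y-y\circ x)\succ z=y\succ(x\succ z)-x\succ(y\succ z)$; $x\prec(y\circ z)=(y\succ x)\prec z-(x\prec y)\prec z-y\succ(x\prec z)$; $(x\circ y)\succ z=-(x\succ z)\prec y$; $(x\prec y)\prec z=(x\prec z)\prec y$; $(x\circ y-y\circ x)\prec z=x\succ(y\circ z)-y\succ(x\circ z)$. A representation of it is $(V,l_{\succ},r_{\succ},l_{\prec},r_{\prec})$ ($V$ finite-dimensional, maps $A\to\mathrm{End}(V)$) such that, with $l_{\circ}=l_{\succ}+l_{\prec}$, $r_{\circ}=r_{\succ}+r_{\prec}$: $l_{\succ}(x\circ y-y\circ x)=l_{\succ}(y)l_{\succ}(x)-l_{\succ}(x)l_{\succ}(y)$; $r_{\prec}(x\circ y)=r_{\prec}(y)l_{\succ}(x)-r_{\prec}(y)r_{\prec}(x)-l_{\succ}(x)r_{\prec}(y)$; $l_{\succ}(x\circ y)=-r_{\prec}(y)l_{\succ}(x)$; $l_{\prec}(x\prec y)=r_{\prec}(y)l_{\prec}(x)$; $l_{\prec}(x\circ y-y\circ x)=l_{\succ}(x)l_{\circ}(y)-l_{\succ}(y)l_{\circ}(x)$; $r_{\succ}(x)(l_{\circ}(y)-r_{\circ}(y))=r_{\succ}(y\succ x)-l_{\succ}(y)r_{\succ}(x)$; $l_{\prec}(x)l_{\circ}(y)=l_{\prec}(y\succ x)-l_{\prec}(x\prec y)-l_{\succ}(y)l_{\prec}(x)$;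 $r_{\prec}(x)(l_{\circ}(y)-r_{\circ}(y))=l_{\succ}(y)r_{\circ}(x)-r_{\succ}(y\circ x)$; $r_{\succ}(x)l_{\circ}(y)=-l_{\prec}(y\succ x)$; $r_{\prec}(x)r_{\prec}(y)=r_{\prec}(y)r_{\prec}(x)$; $l_{\prec}(x)r_{\circ}(y)=r_{\prec}(y)r_{\succ}(x)-r_{\prec}(y)l_{\prec}(x)-r_{\succ}(x\prec y)$; $r_{\succ}(x)r_{\circ}(y)=-r_{\prec}(y)r_{\succ}(x)$. For $f:A\to\mathrm{End}(V)$, $\langle f^*(x)u^*,v\rangle=-\langle u^*,f(x)v\rangle$. $\tau$ is the flip of tensor factors. An $\mathcal O$-operator on $(A,\succ,\prec)$ associated to $(V,l_{\succ},r_{\succ},l_{\prec},r_{\prec})$ is a linear $T:V\to A$ with $T(u)\succ T(v)=T(l_{\succ}(T(u))v+r_{\succ}(T(v))u)$ and $T(u)\prec T(v)=T(l_{\prec}(T(u))v+r_{\prec}(T(v))u)$. For an anti-pre-Novikov algebra $B$ with $x\odot y=x\succ y+y\prec x$, $s=\sum_i a_i\otimes b_i\in B\otimes B$ solves the anti-pre-Novikov Yang–Baxter equation if $\sum_{i,j}a_i\circ a_j\otimes b_i\otimes b_j+\sum_{i,j}a_j\otimes a_i\otimes(b_i\odot b_j)+\sum_{i,j}a_i\otimes(b_i\prec a_j)\otimes b_j=0$. *)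

theory Defs
  imports Complex_Main "HOL-Library.Function_Algebras"
begin

definition bilin_op :: "('k::field \<Rightarrow> 'a::ab_group_add \<Rightarrow> 'a) \<Rightarrow> ('a \<Rightarrow> 'a \<Rightarrow> 'a) \<Rightarrow> bool" where
  "bilin_op sA m \<longleftrightarrow> (\<forall>x. Vector_Spaces.linear sA sA (m x)) \<and> (\<forall>y. Vector_Spaces.linear sA sA (\<lambda>x. m x y))"

definition anti_pre_Novikov ::
  "('k::field \<Rightarrow> 'a::ab_group_add \<Rightarrow> 'a) \<Rightarrow> ('a \<Rightarrow> 'a \<Rightarrow> 'a) \<Rightarrow> ('a \<Rightarrow> 'a \<Rightarrow> 'a) \<Rightarrow> bool" where
  "anti_pre_Novikov sA s p \<longleftrightarrow> vector_space sA \<and> bilin_op sA s \<and> bilin_op sA p \<and>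
   (let c = (\<lambda>x y. s x y + p x y) in
    (\<forall>x y z. s (c x y - c y x) z = s y (s x z) - s x (s y z)) \<and>
    (\<forall>x y z. p x (c y z) = p (s y x) z - p (p x y) z - s y (p x z)) \<and>
    (\<forall>x y z. s (c x y) z = - p (s x z) y) \<and>
    (\<forall>x y z. p (p x y) z = p (p x z) y) \<and>
    (\<forall>x y z. p (c x y - c y x) z = s x (c y z) - s y (c x z)))"

definition lin_rep_map ::
  "('k::field \<Rightarrow> 'a::ab_group_add \<Rightarrow> 'a) \<Rightarrow> ('k \<Rightarrow> 'v::ab_group_add \<Rightarrow> 'v) \<Rightarrow> ('a \<Rightarrow> 'v \<Rightarrow> 'v) \<Rightarrow> bool" where
  "lin_rep_map sA sV f \<longleftrightarrow> (\<forall>x. Vector_Spaces.linear sV sV (f x)) \<and> (\<forall>v. Vector_Spaces.linear sA sV (\<lambda>x. f x v))"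

text \<open>Representation (V, l1, r1, l2, r2) = (V, l_succ, r_succ, l_prec, r_prec), V finite-dimensional.\<close>
definition apN_rep ::
  "('k::field \<Rightarrow> 'a::ab_group_add \<Rightarrow> 'a) \<Rightarrow> ('a \<Rightarrow> 'a \<Rightarrow> 'a) \<Rightarrow> ('a \<Rightarrow> 'a \<Rightarrow> 'a) \<Rightarrow>
   ('k \<Rightarrow> 'v::ab_group_add \<Rightarrow> 'v) \<Rightarrow> 'v set \<Rightarrow>
   ('a \<Rightarrow> 'v \<Rightarrow> 'v) \<Rightarrow> ('a \<Rightarrow> 'v \<Rightarrow> 'v) \<Rightarrow> ('a \<Rightarrow> 'v \<Rightarrow> 'v) \<Rightarrow> ('a \<Rightarrow> 'v \<Rightarrow> 'v) \<Rightarrow> bool" where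
  "apN_rep sA s p sV B l1 r1 l2 r2 \<longleftrightarrow>
   finite_dimensional_vector_space sV B \<and>
   lin_rep_map sA sV l1 \<and> lin_rep_map sA sV r1 \<and> lin_rep_map sA sV l2 \<and> lin_rep_map sA sV r2 \<and>
   (let c = (\<lambda>x y. s x y + p x y); lc = (\<lambda>x. l1 x + l2 x); rc = (\<lambda>x. r1 x + r2 x) in
    (\<forall>x y. l1 (c x y - c y x) = l1 y \<circ> l1 x - l1 x \<circ> l1 y) \<and>
    (\<forall>x y. r2 (c x y) = r2 y \<circ> l1 x - r2 y \<circ> r2 x - l1 x \<circ> r2 y) \<and>
    (\<forall>x y. l1 (c x y) = - (r2 y \<circ> l1 x)) \<and>
    (\<forall>x y. l2 (p x y) = r2 y \<circ> l2 x) \<and>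
    (\<forall>x y. l2 (c x y - c y x) = l1 x \<circ> lc y - l1 y \<circ> lc x) \<and>
    (\<forall>x y. r1 x \<circ> (lc y - rc y) = r1 (s y x) - l1 y \<circ> r1 x) \<and>
    (\<forall>x y. l2 x \<circ> lc y = l2 (s y x) - l2 (p x y) - l1 y \<circ> l2 x) \<and>
    (\<forall>x y. r2 x \<circ> (lc y - rc y) = l1 y \<circ> rc x - r1 (c y x)) \<and>
    (\<forall>x y. r1 x \<circ> lc y = - l2 (s y x)) \<and>
    (\<forall>x y. r2 x \<circ> r2 y = r2 y \<circ> r2 x) \<and>
    (\<forall>x y. l2 x \<circ> rc y = r2 y \<circ> r1 x - r2 y \<circ> l2 x - r1 (p x y)) \<and>
    (\<forall>x y. r1 x \<circ> rc y = - (r2 y \<circ> r1 x)))"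

definition O_operator ::
  "('a \<Rightarrow> 'a \<Rightarrow> 'a::ab_group_add) \<Rightarrow> ('a \<Rightarrow> 'a \<Rightarrow> 'a) \<Rightarrow>
   ('a \<Rightarrow> 'v::ab_group_add \<Rightarrow> 'v) \<Rightarrow> ('a \<Rightarrow> 'v \<Rightarrow> 'v) \<Rightarrow> ('a \<Rightarrow> 'v \<Rightarrow> 'v) \<Rightarrow> ('a \<Rightarrow> 'v \<Rightarrow> 'v) \<Rightarrow>
   ('v \<Rightarrow> 'a) \<Rightarrow> bool" where
  "O_operator s p l1 r1 l2 r2 T \<longleftrightarrow>
   (\<forall>u v. s (T u) (T v) = T (l1 (T u) v + r1 (T v) u)) \<and>
   (\<forall>u v. p (T u) (T v) = T (l2 (T u) v + r2 (T v) u))"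

text \<open>Dual map: V* is modelled as functions 'v \<Rightarrow> 'k (linear ones);
  <f*(x) u*, v> = - <u*, f(x) v>.\<close>
definition dual_map :: "('a \<Rightarrow> 'v \<Rightarrow> 'v) \<Rightarrow> 'a \<Rightarrow> ('v \<Rightarrow> 'k::field) \<Rightarrow> ('v \<Rightarrow> 'k)" where
  "dual_map f x u = (\<lambda>v. - u (f x v))"

definition hat_succ ::
  "('a \<Rightarrow> 'a \<Rightarrow> 'a::ab_group_add) \<Rightarrow> ('a \<Rightarrow> 'a \<Rightarrow> 'a) \<Rightarrow>
   ('a \<Rightarrow> 'v::ab_group_add \<Rightarrow> 'v) \<Rightarrow> ('a \<Rightarrow> 'v \<Rightarrow> 'v) \<Rightarrow> ('a \<Rightarrow> 'v \<Rightarrow> 'v) \<Rightarrow> ('a \<Rightarrow> 'v \<Rightarrow> 'v) \<Rightarrow>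
   'a \<times> ('v \<Rightarrow> 'k::field) \<Rightarrow> 'a \<times> ('v \<Rightarrow> 'k) \<Rightarrow> 'a \<times> ('v \<Rightarrow> 'k)" where
  "hat_succ s p l1 r1 l2 r2 X Y =
    (case X of (x, a) \<Rightarrow> case Y of (y, b) \<Rightarrow>
      (s x y,
       - dual_map (\<lambda>z. (l1 z + l2 z) + (r1 z + r2 z)) x b - dual_map r1 y a))"

definition hat_prec ::
  "('a \<Rightarrow> 'a \<Rightarrow> 'a::ab_group_add) \<Rightarrow> ('a \<Rightarrow> 'a \<Rightarrow> 'a) \<Rightarrow>
   ('a \<Rightarrow> 'v::ab_group_add \<Rightarrow> 'v) \<Rightarrow> ('a \<Rightarrow> 'v \<Rightarrow> 'v) \<Rightarrow> ('a \<Rightarrow> 'v \<Rightarrow> 'v) \<Rightarrow> ('a \<Rightarrow> 'v \<Rightarrow> 'v) \<Rightarrow>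
   'a \<times> ('v \<Rightarrow> 'k::field) \<Rightarrow> 'a \<times> ('v \<Rightarrow> 'k) \<Rightarrow> 'a \<times> ('v \<Rightarrow> 'k)" where
  "hat_prec s p l1 r1 l2 r2 X Y =
    (case X of (x, a) \<Rightarrow> case Y of (y, b) \<Rightarrow>
      (p x y,
       dual_map (\<lambda>z. r1 z + l2 z) x b + dual_map (\<lambda>z. r1 z + r2 z) y a))"

definition hat_add :: "'a::ab_group_add \<times> ('v \<Rightarrow> 'k::field) \<Rightarrow> 'a \<times> ('v \<Rightarrow> 'k) \<Rightarrow> 'a \<times> ('v \<Rightarrow> 'k)" where
  "hat_add X Y = (fst X + fst Y, snd X + snd Y)"

definition hat_functional ::
  "('k::field \<Rightarrow> 'a::ab_group_add \<Rightarrow> 'a) \<Rightarrow> ('k \<Rightarrow> 'v::ab_group_add \<Rightarrow> 'v) \<Rightarrow>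
   ('a \<times> ('v \<Rightarrow> 'k) \<Rightarrow> 'k) \<Rightarrow> bool" where
  "hat_functional sA sV F \<longleftrightarrow>
   (\<forall>x y a b. Vector_Spaces.linear sV (*) a \<longrightarrow> Vector_Spaces.linear sV (*) b \<longrightarrow>
      F (x + y, a + b) = F (x, a) + F (y, b)) \<and>
   (\<forall>c x a. Vector_Spaces.linear sV (*) a \<longrightarrow> F (sA c x, \<lambda>v. c * a v) = c * F (x, a))"

text \<open>The element  \<Sum>i a_i\<otimes>b_i  (finite index set I) of hat A \<otimes> hat A solves the
  anti-pre-Novikov Yang-Baxter equation in (hat A, hs, hp). The vanishing of the element of
  hat A \<otimes> hat A \<otimes> hat A is expressed by the vanishing of all its pairings with
  F \<otimes> G \<otimes> H for linear functionals F, G, H on hat A.\<close>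
definition hat_APN_YBE ::
  "('k::field \<Rightarrow> 'a::ab_group_add \<Rightarrow> 'a) \<Rightarrow> ('k \<Rightarrow> 'v::ab_group_add \<Rightarrow> 'v) \<Rightarrow>
   ('a \<times> ('v \<Rightarrow> 'k) \<Rightarrow> 'a \<times> ('v \<Rightarrow> 'k) \<Rightarrow> 'a \<times> ('v \<Rightarrow> 'k)) \<Rightarrow>
   ('a \<times> ('v \<Rightarrow> 'k) \<Rightarrow> 'a \<times> ('v \<Rightarrow> 'k) \<Rightarrow> 'a \<times> ('v \<Rightarrow> 'k)) \<Rightarrow>
   'i set \<Rightarrow> ('i \<Rightarrow> 'a \<times> ('v \<Rightarrow> 'k)) \<Rightarrow> ('i \<Rightarrow> 'a \<times> ('v \<Rightarrow> 'k)) \<Rightarrow> bool" where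
  "hat_APN_YBE sA sV hs hp I a b \<longleftrightarrow>
   (\<forall>F G H. hat_functional sA sV F \<longrightarrow> hat_functional sA sV G \<longrightarrow> hat_functional sA sV H \<longrightarrow>
     (\<Sum>i\<in>I. \<Sum>j\<in>I.
        F (hat_add (hs (a i) (a j)) (hp (a i) (a j))) * G (b i) * H (b j)
      + F (a j) * G (a i) * H (hat_add (hs (b i) (b j)) (hp (b j) (b i)))
      + F (a i) * G (hp (b i) (a j)) * H (b j)) = 0)"

definition dual_basis_vec :: "('k::field \<Rightarrow> 'v::ab_group_add \<Rightarrow> 'v) \<Rightarrow> 'v set \<Rightarrow> 'v \<Rightarrow> ('v \<Rightarrow> 'k)" where
  "dual_basis_vec sV B v = (\<lambda>w. module.representation sV B w v)"

text \<open>s = T - \<tau>(T) = \<Sum>_{v\<in>B} (T v \<otimes> v* - v* \<otimes> T v), indexed by B \<times> bool.\<close>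
definition sT_left :: "('k::field \<Rightarrow> 'v::ab_group_add \<Rightarrow> 'v) \<Rightarrow> 'v set \<Rightarrow> ('v \<Rightarrow> 'a::ab_group_add) \<Rightarrow>
   'v \<times> bool \<Rightarrow> 'a \<times> ('v \<Rightarrow> 'k)" where
  "sT_left sV B T i = (if snd i then (T (fst i), 0) else (0, - dual_basis_vec sV B (fst i)))"

definition sT_right :: "('k::field \<Rightarrow> 'v::ab_group_add \<Rightarrow> 'v) \<Rightarrow> 'v set \<Rightarrow> ('v \<Rightarrow> 'a::ab_group_add) \<Rightarrow>
   'v \<times> bool \<Rightarrow> 'a \<times> ('v \<Rightarrow> 'k)" where
  "sT_right sV B T i = (if snd i then (0, dual_basis_vec sV B (fst i)) else (T (fst i), 0))"

end

theory Submission
  imports Defs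
begin

(* Write a linear functional on A \<oplus> V* as F = f + ev_u, with f its restriction to A and
   u \<in> V = V** (V is finite-dimensional). Pairing the Yang-Baxter element of s = T - \<tau>(T) with
   F \<otimes> G \<otimes> H, the dual-basis expansions collapse and leave
     f (D\<^sub>\<succ>(w,z) + D\<^sub>\<prec>(w,z)) - g (D\<^sub>\<prec>(u,z)) + h (D\<^sub>\<succ>(w,u) + D\<^sub>\<prec>(u,w)),
   where D\<^sub>\<succ>(u,v) = T u \<succ> T v - T (l\<^sub>\<succ>(T u) v + r\<^sub>\<succ>(T v) u) and D\<^sub>\<prec> is the analogous
   defect for \<prec>. Choosing F, G, H among the ev_u and the functionals on A, which separate
   points, shows that this vanishes identically iff both defects do, i.e. iff T is an
   O-operator. *)

lemma linear_functionals_separate: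
  fixes scale :: "'k::field \<Rightarrow> 'a::ab_group_add \<Rightarrow> 'a"
  assumes "vector_space scale" and "\<And>g. Vector_Spaces.linear scale (*) g \<Longrightarrow> g y = 0"
  shows "y = 0"
proof (rule ccontr)
  assume "y \<noteq> 0"
  interpret vector_space_pair scale "(*) :: 'k \<Rightarrow> 'k \<Rightarrow> 'k"
    using assms(1) by (simp add: vector_space_pair_def vector_space_def algebra_simps)
  have "vs1.independent {y}" using \<open>y \<noteq> 0\<close> by simp
  from linear_independent_extend[OF this, of "\<lambda>_. 1"]
  obtain g where "Vector_Spaces.linear scale (*) g" "g y = 1" by auto
  then show False using assms(2) by fastforce
qed

definition ybe_term ::
  "('a::ab_group_add \<times> ('v \<Rightarrow> 'k::field) \<Rightarrow> 'a \<times> ('v \<Rightarrow> 'k) \<Rightarrow> 'a \<times> ('v \<Rightarrow> 'k)) \<Rightarrow>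
   ('a \<times> ('v \<Rightarrow> 'k) \<Rightarrow> 'a \<times> ('v \<Rightarrow> 'k) \<Rightarrow> 'a \<times> ('v \<Rightarrow> 'k)) \<Rightarrow>
   ('a \<times> ('v \<Rightarrow> 'k) \<Rightarrow> 'k) \<Rightarrow> ('a \<times> ('v \<Rightarrow> 'k) \<Rightarrow> 'k) \<Rightarrow> ('a \<times> ('v \<Rightarrow> 'k) \<Rightarrow> 'k) \<Rightarrow>
   ('i \<Rightarrow> 'a \<times> ('v \<Rightarrow> 'k)) \<Rightarrow> ('i \<Rightarrow> 'a \<times> ('v \<Rightarrow> 'k)) \<Rightarrow> 'i \<Rightarrow> 'i \<Rightarrow> 'k" where
  "ybe_term hs hp F G H a b i j =
     F (hat_add (hs (a i) (a j)) (hp (a i) (a j))) * G (b i) * H (b j)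
   + F (a j) * G (a i) * H (hat_add (hs (b i) (b j)) (hp (b j) (b i)))
   + F (a i) * G (hp (b i) (a j)) * H (b j)"

lemma hat_APN_YBE_iff_ybe_term:
  "hat_APN_YBE sA sV hs hp I a b \<longleftrightarrow>
   (\<forall>F G H. hat_functional sA sV F \<longrightarrow> hat_functional sA sV G \<longrightarrow> hat_functional sA sV H \<longrightarrow>
      (\<Sum>i\<in>I. \<Sum>j\<in>I. ybe_term hs hp F G H a b i j) = 0)"
  unfolding hat_APN_YBE_def ybe_term_def ..

lemma sum_times_bool:
  "(\<Sum>i\<in>A \<times> UNIV. \<phi> i) = (\<Sum>a\<in>A. \<phi> (a, True)) + (\<Sum>a\<in>A. \<phi> (a, False))"
proof -
  have "(\<Sum>i\<in>A \<times> UNIV. \<phi> i) = (\<Sum>a\<in>A. \<Sum>t\<in>UNIV. \<phi> (a, t))"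
    using sum.cartesian_product[of "\<lambda>a t. \<phi> (a, t)" UNIV A] by simp
  then show ?thesis by (simp add: UNIV_bool sum.distrib add.commute)
qed

lemma bilin_op_simps:
  fixes sA :: "'k::field \<Rightarrow> 'a::ab_group_add \<Rightarrow> 'a"
  assumes "bilin_op sA m"
  shows "m (x + y) z = m x z + m y z" "m x (y + z) = m x y + m x z"
    "m (sA c x) y = sA c (m x y)" "m x (sA c y) = sA c (m x y)"
    "m 0 y = 0" "m x 0 = 0"
proof -
  have left: "module_hom sA sA (\<lambda>x. m x y)" and right: "module_hom sA sA (m x)" for x y
    using assms by (simp_all add: bilin_op_def module_hom_iff_linear)
  show "m (x + y) z = m x z + m y z" "m (sA c x) y = sA c (m x y)" "m 0 y = 0"
    by (rule module_hom.add[OF left] module_hom.scale[OF left] module_hom.zero[OF left])+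
  show "m x (y + z) = m x y + m x z" "m x (sA c y) = sA c (m x y)" "m x 0 = 0"
    by (rule module_hom.add[OF right] module_hom.scale[OF right] module_hom.zero[OF right])+
qed

lemma lin_rep_map_simps:
  fixes sV :: "'k::field \<Rightarrow> 'v::ab_group_add \<Rightarrow> 'v"
  assumes "lin_rep_map sA sV f"
  shows "f (x + y) v = f x v + f y v" "f x (v + w) = f x v + f x w"
    "f (sA c x) v = sV c (f x v)" "f x (sV c v) = sV c (f x v)"
    "f 0 v = 0" "f x 0 = 0"
proof -
  have left: "module_hom sA sV (\<lambda>x. f x v)" and right: "module_hom sV sV (f x)" for x v
    using assms by (simp_all add: lin_rep_map_def module_hom_iff_linear)
  show "f (x + y) v = f x v + f y v" "f (sA c x) v = sV c (f x v)" "f 0 v = 0"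
    by (rule module_hom.add[OF left] module_hom.scale[OF left] module_hom.zero[OF left])+
  show "f x (v + w) = f x v + f x w" "f x (sV c v) = sV c (f x v)" "f x 0 = 0"
    by (rule module_hom.add[OF right] module_hom.scale[OF right] module_hom.zero[OF right])+
qed

locale bilinear_rep_setting =
  A: vector_space sA + V: finite_dimensional_vector_space sV B
  for sA :: "'k::field \<Rightarrow> 'a::ab_group_add \<Rightarrow> 'a" and sV :: "'k \<Rightarrow> 'v::ab_group_add \<Rightarrow> 'v"
    and B :: "'v set" +
  fixes s p :: "'a \<Rightarrow> 'a \<Rightarrow> 'a" and l1 r1 l2 r2 :: "'a \<Rightarrow> 'v \<Rightarrow> 'v" and T :: "'v \<Rightarrow> 'a"
  assumes bilin_s: "bilin_op sA s" and bilin_p: "bilin_op sA p"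
    and rep_l1: "lin_rep_map sA sV l1" and rep_r1: "lin_rep_map sA sV r1"
    and rep_l2: "lin_rep_map sA sV l2" and rep_r2: "lin_rep_map sA sV r2"
    and linear_T: "Vector_Spaces.linear sV sA T"
begin

lemma T_module_hom: "module_hom sV sA T"
  using linear_T by (simp add: module_hom_iff_linear)

lemmas T_simps = module_hom.add[OF T_module_hom] module_hom.scale[OF T_module_hom]
  module_hom.zero[OF T_module_hom] module_hom.diff[OF T_module_hom]

lemmas linearity_simps = bilin_op_simps[OF bilin_s] bilin_op_simps[OF bilin_p]
  lin_rep_map_simps[OF rep_l1] lin_rep_map_simps[OF rep_r1]
  lin_rep_map_simps[OF rep_l2] lin_rep_map_simps[OF rep_r2] T_simps

definition linear_functional :: "('v \<Rightarrow> 'k) \<Rightarrow> bool" where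
  "linear_functional \<phi> \<longleftrightarrow> (\<forall>v w. \<phi> (v + w) = \<phi> v + \<phi> w) \<and> (\<forall>c v. \<phi> (sV c v) = c * \<phi> v)"

lemma linear_functional_iff_linear: "linear_functional \<phi> \<longleftrightarrow> Vector_Spaces.linear sV (*) \<phi>"
proof -
  have "vector_space ((*) :: 'k \<Rightarrow> 'k \<Rightarrow> 'k)"
    by unfold_locales (auto simp: algebra_simps)
  then show ?thesis
    unfolding Vector_Spaces.linear_iff linear_functional_def using V.vector_space_axioms by auto
qed

lemma linear_functional_zero [simp]: "linear_functional (\<lambda>v. 0)" "linear_functional 0"
  unfolding linear_functional_def by simp_all

lemma linear_functional_add [simp]:
  "linear_functional \<phi> \<Longrightarrow> linear_functional \<psi> \<Longrightarrow> linear_functional (\<phi> + \<psi>)"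
  unfolding linear_functional_def by (simp add: algebra_simps)

lemma linear_functional_uminus [simp]: "linear_functional \<phi> \<Longrightarrow> linear_functional (- \<phi>)"
  unfolding linear_functional_def by (simp add: algebra_simps)

lemma linear_functional_sum_scale:
  assumes "linear_functional \<phi>" and "finite X"
  shows "\<phi> (\<Sum>b\<in>X. sV (c b) b) = (\<Sum>b\<in>X. c b * \<phi> b)"
  using assms(2)
proof (induction X rule: finite_induct)
  case empty
  have "\<phi> (sV 0 0) = 0 * \<phi> 0" using assms(1) unfolding linear_functional_def by blast
  then show ?case by simp
next
  case (insert x X)
  then show ?case using assms(1) unfolding linear_functional_def by simp
qed

abbreviation coord :: "'v \<Rightarrow> 'v \<Rightarrow> 'k" where
  "coord b \<equiv> dual_basis_vec sV B b"

lemma coord_add [simp]: "coord b (v + w) = coord b v + coord b w"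
  unfolding dual_basis_vec_def
  using V.representation_add[OF V.independent_Basis] V.span_Basis by auto

lemma coord_scale [simp]: "coord b (sV c v) = c * coord b v"
  unfolding dual_basis_vec_def
  using V.representation_scale[OF V.independent_Basis] V.span_Basis by auto

lemma coord_zero [simp]: "coord b 0 = 0"
  unfolding dual_basis_vec_def by (simp add: V.representation_zero)

lemma linear_functional_coord [simp]: "linear_functional (coord b)"
  unfolding linear_functional_def by simp

lemma basis_expansion: "(\<Sum>b\<in>B. sV (coord b v) b) = v"
  unfolding dual_basis_vec_def
  by (rule V.sum_representation_eq) (auto simp: V.independent_Basis V.span_Basis V.finite_Basis)

lemma linear_functional_expansion:
  assumes "linear_functional \<phi>" shows "(\<Sum>b\<in>B. coord b v * \<phi> b) = \<phi> v"
  using linear_functional_sum_scale[OF assms V.finite_Basis, of "\<lambda>b. coord b v"]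
  by (simp add: basis_expansion)

lemma double_expansion:
  assumes "\<And>j. linear_functional (\<lambda>i. \<Phi> i j)" and "\<And>i. linear_functional (\<lambda>j. \<Phi> i j)"
  shows "(\<Sum>i\<in>B. \<Sum>j\<in>B. coord i v * coord j w * \<Phi> i j) = \<Phi> v w"
proof -
  have "(\<Sum>i\<in>B. \<Sum>j\<in>B. coord i v * coord j w * \<Phi> i j) = (\<Sum>i\<in>B. coord i v * \<Phi> i w)"
    by (simp add: mult.assoc sum_distrib_left[symmetric] linear_functional_expansion[OF assms(2)])
  also have "\<dots> = \<Phi> v w" by (rule linear_functional_expansion[OF assms(1)])
  finally show ?thesis .
qed

lemma nested_expansion:
  assumes "linear_functional \<phi>" and "linear_functional (\<lambda>i. \<phi> (X i))"
  shows "(\<Sum>i\<in>B. \<Sum>j\<in>B. coord i v * coord j (X i) * \<phi> j) = \<phi> (X v)"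
proof -
  have "(\<Sum>i\<in>B. \<Sum>j\<in>B. coord i v * coord j (X i) * \<phi> j) = (\<Sum>i\<in>B. coord i v * \<phi> (X i))"
    by (simp add: mult.assoc sum_distrib_left[symmetric] linear_functional_expansion[OF assms(1)])
  also have "\<dots> = \<phi> (X v)" by (rule linear_functional_expansion[OF assms(2)])
  finally show ?thesis .
qed

lemma nested_expansion_swap:
  assumes "linear_functional \<phi>" and "linear_functional (\<lambda>j. \<phi> (X j))"
  shows "(\<Sum>i\<in>B. \<Sum>j\<in>B. coord j v * coord i (X j) * \<phi> i) = \<phi> (X v)"
  using nested_expansion[OF assms, of v] by (subst sum.swap) simp

(* F = hat_restr F + ev_(hat_vec F) on pairs with a linear second component. *)
definition hat_restr :: "('a \<times> ('v \<Rightarrow> 'k) \<Rightarrow> 'k) \<Rightarrow> 'a \<Rightarrow> 'k" where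
  "hat_restr F x = F (x, 0)"

definition hat_vec :: "('a \<times> ('v \<Rightarrow> 'k) \<Rightarrow> 'k) \<Rightarrow> 'v" where
  "hat_vec F = (\<Sum>b\<in>B. sV (F (0, coord b)) b)"

lemma hat_functional_add:
  assumes "hat_functional sA sV F" and "linear_functional a" and "linear_functional b"
  shows "F (x + y, a + b) = F (x, a) + F (y, b)"
  using assms unfolding hat_functional_def linear_functional_iff_linear by blast

lemma hat_functional_scale:
  assumes "hat_functional sA sV F" and "linear_functional a"
  shows "F (sA c x, \<lambda>v. c * a v) = c * F (x, a)"
  using assms unfolding hat_functional_def linear_functional_iff_linear by blast

lemma hat_restr_add: "hat_functional sA sV F \<Longrightarrow> hat_restr F (x + y) = hat_restr F x + hat_restr F y"
  using hat_functional_add[of F 0 0 x y] by (simp add: hat_restr_def)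

lemma hat_restr_scale: "hat_functional sA sV F \<Longrightarrow> hat_restr F (sA c x) = c * hat_restr F x"
  using hat_functional_scale[of F 0 c x] by (simp add: hat_restr_def zero_fun_def)

lemma hat_restr_zero: "hat_functional sA sV F \<Longrightarrow> hat_restr F 0 = 0"
  using hat_restr_scale[of F 0 0] by simp

lemma hat_restr_diff: "hat_functional sA sV F \<Longrightarrow> hat_restr F (x - y) = hat_restr F x - hat_restr F y"
  using hat_restr_add[of F "x - y" y] by simp

lemma hat_functional_on_dual:
  assumes F: "hat_functional sA sV F" and a: "linear_functional a"
  shows "F (0, a) = a (hat_vec F)"
proof -
  have sum: "F (0, \<lambda>v. \<Sum>b\<in>X. c b * coord b v) = (\<Sum>b\<in>X. c b * F (0, coord b))"
    if "finite X" for X c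
    using that
  proof (induction X rule: finite_induct)
    case empty
    then show ?case using hat_restr_zero[OF F] by (simp add: hat_restr_def zero_fun_def)
  next
    case (insert x X)
    have "linear_functional (\<lambda>v. \<Sum>b\<in>X. c b * coord b v)"
      unfolding linear_functional_def by (simp add: algebra_simps sum.distrib sum_distrib_left)
    then have "F (0 + 0, (\<lambda>v. c x * coord x v) + (\<lambda>v. \<Sum>b\<in>X. c b * coord b v))
        = F (0, \<lambda>v. c x * coord x v) + F (0, \<lambda>v. \<Sum>b\<in>X. c b * coord b v)"
      by (intro hat_functional_add[OF F]) (auto simp: linear_functional_def algebra_simps)
    moreover have "F (0, \<lambda>v. c x * coord x v) = c x * F (0, coord x)"
      using hat_functional_scale[OF F linear_functional_coord, of "c x" 0] by simp
    ultimately show ?case using insert by (simp add: plus_fun_def)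
  qed
  have expand: "a = (\<lambda>v. \<Sum>b\<in>B. a b * coord b v)"
    using linear_functional_expansion[OF a] by (auto simp: fun_eq_iff mult.commute)
  have "F (0, a) = (\<Sum>b\<in>B. a b * F (0, coord b))"
    by (subst expand) (rule sum[OF V.finite_Basis])
  also have "\<dots> = a (hat_vec F)"
    unfolding hat_vec_def by (simp add: linear_functional_sum_scale[OF a V.finite_Basis] mult.commute)
  finally show ?thesis .
qed

lemma hat_functional_eval:
  assumes "hat_functional sA sV F" and "linear_functional (snd X)"
  shows "F X = hat_restr F (fst X) + snd X (hat_vec F)"
proof -
  have "F (fst X + 0, 0 + snd X) = F (fst X, 0) + F (0, snd X)"
    using assms by (intro hat_functional_add) simp_all
  then show ?thesis
    using hat_functional_on_dual[OF assms] by (simp add: hat_restr_def)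
qed

abbreviation "hs \<equiv> hat_succ s p l1 r1 l2 r2"
abbreviation "hp \<equiv> hat_prec s p l1 r1 l2 r2"

lemma linear_functional_snd_hat_succ [simp]:
  "linear_functional (snd X) \<Longrightarrow> linear_functional (snd Y) \<Longrightarrow> linear_functional (snd (hs X Y))"
  by (cases X; cases Y) (simp add: hat_succ_def dual_map_def linear_functional_def linearity_simps algebra_simps)

lemma linear_functional_snd_hat_prec [simp]:
  "linear_functional (snd X) \<Longrightarrow> linear_functional (snd Y) \<Longrightarrow> linear_functional (snd (hp X Y))"
  by (cases X; cases Y) (simp add: hat_prec_def dual_map_def linear_functional_def linearity_simps algebra_simps)

lemma linear_functional_snd_hat_add [simp]:
  "linear_functional (snd X) \<Longrightarrow> linear_functional (snd Y) \<Longrightarrow> linear_functional (snd (hat_add X Y))"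
  by (simp add: hat_add_def)

lemma linear_functional_snd_sT [simp]:
  "linear_functional (snd (sT_left sV B T i))" "linear_functional (snd (sT_right sV B T i))"
  by (simp_all add: sT_left_def sT_right_def)

definition succ_defect :: "'v \<Rightarrow> 'v \<Rightarrow> 'a" where
  "succ_defect u v = s (T u) (T v) - T (l1 (T u) v + r1 (T v) u)"

definition prec_defect :: "'v \<Rightarrow> 'v \<Rightarrow> 'a" where
  "prec_defect u v = p (T u) (T v) - T (l2 (T u) v + r2 (T v) u)"

lemma O_operator_iff_defects_vanish:
  "O_operator s p l1 r1 l2 r2 T \<longleftrightarrow> (\<forall>u v. succ_defect u v = 0 \<and> prec_defect u v = 0)"
  unfolding O_operator_def succ_defect_def prec_defect_def by auto

definition defect_pairing ::
    "('a \<times> ('v \<Rightarrow> 'k) \<Rightarrow> 'k) \<Rightarrow> ('a \<times> ('v \<Rightarrow> 'k) \<Rightarrow> 'k) \<Rightarrow> ('a \<times> ('v \<Rightarrow> 'k) \<Rightarrow> 'k) \<Rightarrow> 'k" where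
  "defect_pairing F G H =
     hat_restr F (succ_defect (hat_vec G) (hat_vec H) + prec_defect (hat_vec G) (hat_vec H))
   - hat_restr G (prec_defect (hat_vec F) (hat_vec H))
   + hat_restr H (succ_defect (hat_vec G) (hat_vec F) + prec_defect (hat_vec F) (hat_vec G))"

abbreviation ybe :: "('a \<times> ('v \<Rightarrow> 'k) \<Rightarrow> 'k) \<Rightarrow> ('a \<times> ('v \<Rightarrow> 'k) \<Rightarrow> 'k) \<Rightarrow> ('a \<times> ('v \<Rightarrow> 'k) \<Rightarrow> 'k) \<Rightarrow>
    'v \<times> bool \<Rightarrow> 'v \<times> bool \<Rightarrow> 'k" where
  "ybe F G H \<equiv> ybe_term hs hp F G H (sT_left sV B T) (sT_right sV B T)"

context
  fixes F G H
  assumes F: "hat_functional sA sV F" and G: "hat_functional sA sV G" and H: "hat_functional sA sV H"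
begin

lemmas eval_simps = hat_functional_eval[OF F] hat_functional_eval[OF G] hat_functional_eval[OF H]
  hat_restr_add[OF F] hat_restr_add[OF G] hat_restr_add[OF H]
  hat_restr_scale[OF F] hat_restr_scale[OF G] hat_restr_scale[OF H]
  hat_restr_zero[OF F] hat_restr_zero[OF G] hat_restr_zero[OF H]

lemmas component_simps = sT_left_def sT_right_def hat_succ_def hat_prec_def hat_add_def dual_map_def
  eval_simps linearity_simps

lemma ybe_block_TT:
  "(\<Sum>i\<in>B. \<Sum>j\<in>B. ybe F G H (i, True) (j, True))
   = hat_restr F (s (T (hat_vec G)) (T (hat_vec H)) + p (T (hat_vec G)) (T (hat_vec H)))
   - hat_restr F (T (r1 (T (hat_vec H)) (hat_vec G) + r2 (T (hat_vec H)) (hat_vec G)))"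
proof -
  let ?w = "hat_vec G" and ?z = "hat_vec H" and ?f = "hat_restr F"
  have "ybe F G H (i, True) (j, True)
     = coord i ?w * coord j ?z * ?f (s (T i) (T j) + p (T i) (T j))
     - coord j ?z * coord i (r1 (T j) ?w + r2 (T j) ?w) * ?f (T i)" for i j
    unfolding ybe_term_def by (simp add: eval_simps) (simp add: component_simps algebra_simps)
  moreover have "(\<Sum>i\<in>B. \<Sum>j\<in>B. coord i ?w * coord j ?z * ?f (s (T i) (T j) + p (T i) (T j)))
      = ?f (s (T ?w) (T ?z) + p (T ?w) (T ?z))"
    by (rule double_expansion) (simp_all add: linear_functional_def component_simps algebra_simps)
  moreover have "(\<Sum>i\<in>B. \<Sum>j\<in>B. coord j ?z * coord i (r1 (T j) ?w + r2 (T j) ?w) * ?f (T i))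
      = ?f (T (r1 (T ?z) ?w + r2 (T ?z) ?w))"
    by (rule nested_expansion_swap) (simp_all add: linear_functional_def component_simps algebra_simps)
  ultimately show ?thesis by (simp only: sum_subtractf)
qed

lemma ybe_block_TF:
  "(\<Sum>i\<in>B. \<Sum>j\<in>B. ybe F G H (i, True) (j, False))
   = hat_restr G (T (l2 (T (hat_vec F)) (hat_vec H)))
   - hat_restr H (T (l1 (T (hat_vec G)) (hat_vec F) + r2 (T (hat_vec G)) (hat_vec F)))"
proof -
  let ?u = "hat_vec F" and ?w = "hat_vec G" and ?z = "hat_vec H"
  let ?g = "hat_restr G" and ?h = "hat_restr H"
  have "ybe F G H (i, True) (j, False)
     = coord j ?u * coord i (l2 (T j) ?z) * ?g (T i)
     - coord i ?w * coord j (l1 (T i) ?u + r2 (T i) ?u) * ?h (T j)" for i j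
    unfolding ybe_term_def by (simp add: eval_simps) (simp add: component_simps algebra_simps)
  moreover have "(\<Sum>i\<in>B. \<Sum>j\<in>B. coord j ?u * coord i (l2 (T j) ?z) * ?g (T i))
      = ?g (T (l2 (T ?u) ?z))"
    by (rule nested_expansion_swap) (simp_all add: linear_functional_def component_simps algebra_simps)
  moreover have "(\<Sum>i\<in>B. \<Sum>j\<in>B. coord i ?w * coord j (l1 (T i) ?u + r2 (T i) ?u) * ?h (T j))
      = ?h (T (l1 (T ?w) ?u + r2 (T ?w) ?u))"
    by (rule nested_expansion) (simp_all add: linear_functional_def component_simps algebra_simps)
  ultimately show ?thesis by (simp only: sum_subtractf)
qed

lemma ybe_block_FT:
  "(\<Sum>i\<in>B. \<Sum>j\<in>B. ybe F G H (i, False) (j, True))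
   = hat_restr G (T (r2 (T (hat_vec H)) (hat_vec F)))
   - hat_restr F (T (l1 (T (hat_vec G)) (hat_vec H) + l2 (T (hat_vec G)) (hat_vec H)))
   - hat_restr G (p (T (hat_vec F)) (T (hat_vec H)))"
proof -
  let ?u = "hat_vec F" and ?w = "hat_vec G" and ?z = "hat_vec H"
  let ?f = "hat_restr F" and ?g = "hat_restr G"
  have "ybe F G H (i, False) (j, True)
     = coord j ?z * coord i (r2 (T j) ?u) * ?g (T i)
     - coord i ?w * coord j (l1 (T i) ?z + l2 (T i) ?z) * ?f (T j)
     - coord i ?u * coord j ?z * ?g (p (T i) (T j))" for i j
    unfolding ybe_term_def by (simp add: eval_simps) (simp add: component_simps algebra_simps)
  moreover have "(\<Sum>i\<in>B. \<Sum>j\<in>B. coord j ?z * coord i (r2 (T j) ?u) * ?g (T i))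
      = ?g (T (r2 (T ?z) ?u))"
    by (rule nested_expansion_swap) (simp_all add: linear_functional_def component_simps algebra_simps)
  moreover have "(\<Sum>i\<in>B. \<Sum>j\<in>B. coord i ?w * coord j (l1 (T i) ?z + l2 (T i) ?z) * ?f (T j))
      = ?f (T (l1 (T ?w) ?z + l2 (T ?w) ?z))"
    by (rule nested_expansion) (simp_all add: linear_functional_def component_simps algebra_simps)
  moreover have "(\<Sum>i\<in>B. \<Sum>j\<in>B. coord i ?u * coord j ?z * ?g (p (T i) (T j)))
      = ?g (p (T ?u) (T ?z))"
    by (rule double_expansion) (simp_all add: linear_functional_def component_simps algebra_simps)
  ultimately show ?thesis by (simp only: sum_subtractf)
qed

lemma ybe_block_FF:
  "(\<Sum>i\<in>B. \<Sum>j\<in>B. ybe F G H (i, False) (j, False))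
   = hat_restr H (s (T (hat_vec G)) (T (hat_vec F)) + p (T (hat_vec F)) (T (hat_vec G)))
   - hat_restr H (T (r1 (T (hat_vec F)) (hat_vec G) + l2 (T (hat_vec F)) (hat_vec G)))"
proof -
  let ?u = "hat_vec F" and ?w = "hat_vec G" and ?h = "hat_restr H"
  have "ybe F G H (i, False) (j, False)
     = coord i ?w * coord j ?u * ?h (s (T i) (T j) + p (T j) (T i))
     - coord i ?u * coord j (r1 (T i) ?w + l2 (T i) ?w) * ?h (T j)" for i j
    unfolding ybe_term_def by (simp add: eval_simps) (simp add: component_simps algebra_simps)
  moreover have "(\<Sum>i\<in>B. \<Sum>j\<in>B. coord i ?w * coord j ?u * ?h (s (T i) (T j) + p (T j) (T i)))
      = ?h (s (T ?w) (T ?u) + p (T ?u) (T ?w))"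
    by (rule double_expansion) (simp_all add: linear_functional_def component_simps algebra_simps)
  moreover have "(\<Sum>i\<in>B. \<Sum>j\<in>B. coord i ?u * coord j (r1 (T i) ?w + l2 (T i) ?w) * ?h (T j))
      = ?h (T (r1 (T ?u) ?w + l2 (T ?u) ?w))"
    by (rule nested_expansion) (simp_all add: linear_functional_def component_simps algebra_simps)
  ultimately show ?thesis by (simp only: sum_subtractf)
qed

lemma ybe_pairing_eq_defects:
  "(\<Sum>i\<in>B \<times> UNIV. \<Sum>j\<in>B \<times> UNIV. ybe F G H i j)
   = defect_pairing F G H"
proof -
  have "(\<Sum>i\<in>B \<times> UNIV. \<Sum>j\<in>B \<times> UNIV. ybe F G H i j)
      = (\<Sum>i\<in>B. \<Sum>j\<in>B. ybe F G H (i, True) (j, True)) + (\<Sum>i\<in>B. \<Sum>j\<in>B. ybe F G H (i, False) (j, True))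
      + ((\<Sum>i\<in>B. \<Sum>j\<in>B. ybe F G H (i, True) (j, False)) + (\<Sum>i\<in>B. \<Sum>j\<in>B. ybe F G H (i, False) (j, False)))"
    by (simp only: sum_times_bool sum.distrib)
  then show ?thesis
    unfolding ybe_block_TT ybe_block_TF ybe_block_FT ybe_block_FF defect_pairing_def
      succ_defect_def prec_defect_def
    by (simp add: hat_restr_diff[OF F] hat_restr_diff[OF G] hat_restr_diff[OF H] eval_simps T_simps)
qed

end

definition eval_at :: "'v \<Rightarrow> 'a \<times> ('v \<Rightarrow> 'k) \<Rightarrow> 'k" where
  "eval_at u X = snd X u"

definition fst_lift :: "('a \<Rightarrow> 'k) \<Rightarrow> 'a \<times> ('v \<Rightarrow> 'k) \<Rightarrow> 'k" where
  "fst_lift g X = g (fst X)"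

lemma hat_functional_eval_at: "hat_functional sA sV (eval_at u)"
  unfolding hat_functional_def eval_at_def by simp

lemma hat_restr_eval_at [simp]: "hat_restr (eval_at u) x = 0"
  by (simp add: hat_restr_def eval_at_def)

lemma hat_vec_eval_at [simp]: "hat_vec (eval_at u) = u"
  unfolding hat_vec_def eval_at_def by (simp add: basis_expansion)

lemma hat_functional_fst_lift: "Vector_Spaces.linear sA (*) g \<Longrightarrow> hat_functional sA sV (fst_lift g)"
  unfolding hat_functional_def fst_lift_def Vector_Spaces.linear_iff by simp

lemma hat_restr_fst_lift [simp]: "hat_restr (fst_lift g) x = g x"
  by (simp add: hat_restr_def fst_lift_def)

lemma hat_vec_fst_lift [simp]:
  assumes "Vector_Spaces.linear sA (*) g" shows "hat_vec (fst_lift g) = 0"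
  using module_hom.zero[of sA "(*)" g] assms by (simp add: hat_vec_def fst_lift_def module_hom_iff_linear)

lemma hat_APN_YBE_iff_defect_pairings_vanish:
  "hat_APN_YBE sA sV hs hp (B \<times> UNIV) (sT_left sV B T) (sT_right sV B T) \<longleftrightarrow>
   (\<forall>F G H. hat_functional sA sV F \<longrightarrow> hat_functional sA sV G \<longrightarrow> hat_functional sA sV H \<longrightarrow>
      defect_pairing F G H = 0)"
  unfolding hat_APN_YBE_iff_ybe_term by (auto simp: ybe_pairing_eq_defects)

lemma defect_pairings_vanish_iff:
  "(\<forall>F G H. hat_functional sA sV F \<longrightarrow> hat_functional sA sV G \<longrightarrow> hat_functional sA sV H \<longrightarrow>
      defect_pairing F G H = 0)
   \<longleftrightarrow> (\<forall>u v. succ_defect u v = 0 \<and> prec_defect u v = 0)"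
proof (intro iffI allI conjI)
  assume pairing: "\<forall>F G H. hat_functional sA sV F \<longrightarrow> hat_functional sA sV G \<longrightarrow> hat_functional sA sV H \<longrightarrow>
    defect_pairing F G H = 0"
  show prec: "prec_defect u v = 0" for u v
  proof (rule linear_functionals_separate[OF A.vector_space_axioms])
    fix g assume "Vector_Spaces.linear sA (*) g"
    then show "g (prec_defect u v) = 0"
      using pairing[rule_format, OF hat_functional_eval_at[of u] hat_functional_fst_lift hat_functional_eval_at[of v]]
      by (simp add: defect_pairing_def)
  qed
  have "succ_defect u v + prec_defect u v = 0" for u v
  proof (rule linear_functionals_separate[OF A.vector_space_axioms])
    fix g assume "Vector_Spaces.linear sA (*) g"
    then show "g (succ_defect u v + prec_defect u v) = 0"
      using pairing[rule_format, OF hat_functional_fst_lift hat_functional_eval_at[of u] hat_functional_eval_at[of v]]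
      by (simp add: defect_pairing_def)
  qed
  then show "succ_defect u v = 0" for u v
    using prec by simp
next
  fix F G H
  assume "\<forall>u v. succ_defect u v = 0 \<and> prec_defect u v = 0"
  then show "hat_functional sA sV F \<longrightarrow> hat_functional sA sV G \<longrightarrow> hat_functional sA sV H \<longrightarrow>
      defect_pairing F G H = 0"
    by (simp add: defect_pairing_def hat_restr_zero)
qed

theorem hat_APN_YBE_iff_O_operator:
  "hat_APN_YBE sA sV hs hp (B \<times> UNIV) (sT_left sV B T) (sT_right sV B T) \<longleftrightarrow> O_operator s p l1 r1 l2 r2 T"
  unfolding hat_APN_YBE_iff_defect_pairings_vanish defect_pairings_vanish_iff
    O_operator_iff_defects_vanish ..

end

theorem mainTheorem8:
  fixes sA :: "'k::field \<Rightarrow> 'a::ab_group_add \<Rightarrow> 'a"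
    and s p :: "'a \<Rightarrow> 'a \<Rightarrow> 'a"
    and sV :: "'k \<Rightarrow> 'v::ab_group_add \<Rightarrow> 'v"
    and B :: "'v set"
    and l1 r1 l2 r2 :: "'a \<Rightarrow> 'v \<Rightarrow> 'v"
    and T :: "'v \<Rightarrow> 'a"
  assumes "anti_pre_Novikov sA s p"
    and "apN_rep sA s p sV B l1 r1 l2 r2"
    and "Vector_Spaces.linear sV sA T"
  shows "hat_APN_YBE sA sV (hat_succ s p l1 r1 l2 r2) (hat_prec s p l1 r1 l2 r2)
           (B \<times> UNIV) (sT_left sV B T) (sT_right sV B T)
         \<longleftrightarrow> O_operator s p l1 r1 l2 r2 T"
proof -
  interpret bilinear_rep_setting sA sV B s p l1 r1 l2 r2 T
    using assms unfolding bilinear_rep_setting_def bilinear_rep_setting_axioms_def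
      anti_pre_Novikov_def apN_rep_def by auto
  show ?thesis by (rule hat_APN_YBE_iff_O_operator)
qed

end
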